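(* Let $\mathcal{H}$ be a complex Hilbert space and let $A,B,X\in\mathcal{B}(\mathcal{H})$ be such that $A$, $X$, $X^{*}$, $B$ pairwise commute, $A$ is positive and invertible, and $M=\begin{pmatrix} A & X\\ X^{*} & B\end{pmatrix}\in\mathcal{B}(\mathcal{H}\oplus\mathcal{H})$ is positive. Assume $\det M:=AB-X^{*}X=0$. Then, with $\operatorname{tr}M:=A+B$, $$\sqrt{M}=\begin{pmatrix} (\operatorname{tr}M)^{-1/2} & 0\\ 0 & (\operatorname{tr}M)^{-1/2}\end{pmatrix}\begin{pmatrix} A & X\\ X^{*} & B\end{pmatrix}.$$
   Context: $\sqrt{M}$ denotes the positive square root of $M$; $\operatorname{tr}M$ is positive and invertible since it dominates $A$. *)

theory Defs
  imports "HOL-Analysis.Analysis"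
begin

text \<open>A complex Hilbert space, presented as a real Hilbert space (real inner product,
  complete) together with a complex scalar multiplication extending the real one, such that
  multiplication by the imaginary unit is an isometry.  The complex inner product is then
  recovered by cinner below (conjugate-linear in the first, linear in the second argument).\<close>

class complex_hilbert = real_inner + complete_space +
  fixes cscale :: "complex \<Rightarrow> 'a \<Rightarrow> 'a"
  assumes cscale_add_right: "cscale a (x + y) = cscale a x + cscale a y"
    and cscale_add_left: "cscale (a + b) x = cscale a x + cscale b x"
    and cscale_cscale: "cscale a (cscale b x) = cscale (a * b) x"
    and cscale_of_real: "cscale (complex_of_real r) x = scaleR r x"
    and inner_cscale_ii: "inner (cscale \<i> x) (cscale \<i> y) = inner x y"

definition cinner :: "'a::complex_hilbert \<Rightarrow> 'a \<Rightarrow> complex" where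
  "cinner x y = Complex (inner x y) (- inner x (cscale \<i> y))"

instantiation prod :: (complex_hilbert, complex_hilbert) complex_hilbert
begin
definition cscale_prod_def: "cscale c p = (cscale c (fst p), cscale c (snd p))"
instance
  by standard (auto simp: cscale_prod_def inner_prod_def cscale_add_right cscale_add_left
      cscale_cscale cscale_of_real inner_cscale_ii)
end

definition bounded_op :: "('a::complex_hilbert \<Rightarrow> 'a) \<Rightarrow> bool" where
  "bounded_op T \<longleftrightarrow> bounded_linear T \<and> (\<forall>c x. T (cscale c x) = cscale c (T x))"

definition is_adjoint :: "('a::complex_hilbert \<Rightarrow> 'a) \<Rightarrow> ('a \<Rightarrow> 'a) \<Rightarrow> bool" where
  "is_adjoint T S \<longleftrightarrow> bounded_op T \<and> bounded_op S \<and> (\<forall>x y. cinner (T x) y = cinner x (S y))"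

definition positive_op :: "('a::complex_hilbert \<Rightarrow> 'a) \<Rightarrow> bool" where
  "positive_op T \<longleftrightarrow> bounded_op T \<and> (\<forall>x. Im (cinner x (T x)) = 0 \<and> Re (cinner x (T x)) \<ge> 0)"

definition invertible_op :: "('a::complex_hilbert \<Rightarrow> 'a) \<Rightarrow> bool" where
  "invertible_op T \<longleftrightarrow> bounded_op T \<and> (\<exists>S. bounded_op S \<and> S \<circ> T = id \<and> T \<circ> S = id)"

definition op_sqrt :: "('a::complex_hilbert \<Rightarrow> 'a) \<Rightarrow> ('a \<Rightarrow> 'a)" where
  "op_sqrt T = (THE S. positive_op S \<and> S \<circ> S = T)"

definition block :: "('a \<Rightarrow> 'a) \<Rightarrow> ('a \<Rightarrow> 'a) \<Rightarrow> ('a \<Rightarrow> 'a) \<Rightarrow> ('a \<Rightarrow> 'a) \<Rightarrow> ('a::complex_hilbert \<times> 'a \<Rightarrow> 'a \<times> 'a)" where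
  "block P Q R S = (\<lambda>(x, y). (P x + Q y, R x + S y))"

end

theory Submission
  imports Defs "HOL-Analysis.Generalised_Binomial_Theorem" "HOL-Computational_Algebra.Formal_Power_Series"
begin

text \<open>Since the entries of M commute, the Cayley-Hamilton identity gives M M = (tr M) M when
  det M = 0. The trace P = A + B dominates the positive invertible A, so it is bounded below and its
  real powers can be defined by binomial series. With W = diag(P^(-1/4)) the operator W W M = W M W
  is positive, and (W W M)(W W M) = diag(P^(-1)) M M = M. Positive square roots are unique: if
  S S = T T for positive S and T, then S + T anticommutes with D = S - T, and testing this on
  approximate eigenvectors of D D for the eigenvalue norm(D)^2 forces D = 0. Hence
  sqrt M = diag(P^(-1/2)) M.\<close>

section \<open>Operators on a complex Hilbert space\<close>

subclass (in complex_hilbert) banach ..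

lemma cscale_ii_ii: "cscale \<i> (cscale \<i> x) = - (x::'a::complex_hilbert)"
  using cscale_cscale[of \<i> \<i> x] cscale_of_real[of "-1" x] by simp

lemma inner_cscale_ii_left: "inner (cscale \<i> x) y = - inner x (cscale \<i> (y::'a::complex_hilbert))"
  using inner_cscale_ii[of x "cscale \<i> y"] by (simp add: cscale_ii_ii)

lemma norm_cscale_ii: "norm (cscale \<i> x) = norm (x::'a::complex_hilbert)"
  using inner_cscale_ii[of x x] by (simp add: norm_eq_sqrt_inner)

lemma cscale_eq_scaleR: "cscale c x = Re c *\<^sub>R x + Im c *\<^sub>R cscale \<i> (x::'a::complex_hilbert)"
proof -
  have "cscale c x = cscale (complex_of_real (Re c)) x + cscale (complex_of_real (Im c) * \<i>) x"
    by (metis cscale_add_left complex_eq mult.commute)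
  then show ?thesis by (simp add: cscale_of_real cscale_cscale[symmetric])
qed

lemma bounded_linear_cscale: "bounded_linear (cscale c :: 'a::complex_hilbert \<Rightarrow> 'a)"
proof (rule bounded_linear_intro)
  fix x :: 'a
  have "norm (cscale c x) \<le> norm (Re c *\<^sub>R x) + norm (Im c *\<^sub>R cscale \<i> x)"
    unfolding cscale_eq_scaleR[of c x] by (rule norm_triangle_ineq)
  also have "\<dots> = norm x * (\<bar>Re c\<bar> + \<bar>Im c\<bar>)"
    by (simp add: norm_cscale_ii algebra_simps)
  finally show "norm (cscale c x) \<le> norm x * (\<bar>Re c\<bar> + \<bar>Im c\<bar>)" .
qed (simp_all add: cscale_add_right, metis cscale_cscale cscale_of_real mult.commute)

lemma cscale_zero [simp]: "cscale c (0::'a::complex_hilbert) = 0"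
  using cscale_add_right[of c 0 0] by simp

lemma bounded_op_zero: "bounded_op (\<lambda>_. 0 :: 'a::complex_hilbert)"
  by (simp add: bounded_op_def)

lemma bounded_op_add: "bounded_op F \<Longrightarrow> bounded_op G \<Longrightarrow> bounded_op (\<lambda>x. F x + G x)"
  by (simp add: bounded_op_def bounded_linear_add cscale_add_right)

lemma bounded_op_comp: "bounded_op F \<Longrightarrow> bounded_op G \<Longrightarrow> bounded_op (F \<circ> G)"
  using bounded_linear_compose[of F G] by (simp add: bounded_op_def o_def)

definition selfadjoint :: "('a::real_inner \<Rightarrow> 'a) \<Rightarrow> bool" where
  "selfadjoint T \<longleftrightarrow> (\<forall>x y. inner (T x) y = inner x (T y))"

definition real_positive_op :: "('a::real_inner \<Rightarrow> 'a) \<Rightarrow> bool" where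
  "real_positive_op T \<longleftrightarrow> bounded_linear T \<and> selfadjoint T \<and> (\<forall>x. 0 \<le> inner x (T x))"

lemma positive_op_iff_real_positive_op:
  "positive_op T \<longleftrightarrow> bounded_op T \<and> real_positive_op T"
proof
  assume pos: "positive_op T"
  then have lin: "bounded_linear T" and cT: "\<And>c x. T (cscale c x) = cscale c (T x)"
    by (auto simp: positive_op_def bounded_op_def)
  have real_form: "inner x (cscale \<i> (T x)) = 0" for x
    using pos by (auto simp: positive_op_def cinner_def)
  \<comment> \<open>polarisation of the vanishing form at x + y, followed by y := i y\<close>
  have polar: "inner x (cscale \<i> (T y)) + inner y (cscale \<i> (T x)) = 0" for x y
    using real_form[of "x + y"] real_form[of x] real_form[of y] lin
    by (simp add: linear_simps cscale_add_right inner_add_left inner_add_right)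
  have "selfadjoint T"
    unfolding selfadjoint_def
  proof (intro allI)
    fix x y
    show "inner (T x) y = inner x (T y)"
      using polar[of x "cscale \<i> y"] by (simp add: cT cscale_ii_ii inner_cscale_ii inner_commute)
  qed
  with pos lin show "bounded_op T \<and> real_positive_op T"
    by (auto simp: positive_op_def real_positive_op_def cinner_def)
next
  assume "bounded_op T \<and> real_positive_op T"
  then have cT: "\<And>c x. T (cscale c x) = cscale c (T x)" and sa: "selfadjoint T"
    and pos: "bounded_op T" "\<forall>x. 0 \<le> inner x (T x)"
    by (auto simp: bounded_op_def real_positive_op_def)
  have "inner x (cscale \<i> (T x)) = 0" for x
  proof -
    have "inner x (cscale \<i> (T x)) = inner (T x) (cscale \<i> x)"
      using sa by (simp add: selfadjoint_def cT)
    also have "\<dots> = - inner x (cscale \<i> (T x))"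
      by (simp add: inner_commute[of "T x"] inner_cscale_ii_left)
    finally show ?thesis by simp
  qed
  with pos show "positive_op T" by (auto simp: positive_op_def cinner_def)
qed


section \<open>Uniqueness of positive square roots\<close>

lemma real_positive_norm_sq_le:
  assumes S: "real_positive_op S" and K: "K > 0"
    and numerical_range: "\<And>w. inner w (S w) \<le> K * (norm w)\<^sup>2"
  shows "(norm (S v))\<^sup>2 \<le> K * inner v (S v)"
proof -
  have lin: "bounded_linear S" and sa: "selfadjoint S" and nonneg: "\<And>w. 0 \<le> inner w (S w)"
    using S by (auto simp: real_positive_op_def)
  define u where "u = S v"
  define t where "t = 1 / K"
  have Su: "S (v - t *\<^sub>R u) = u - t *\<^sub>R S u"
    using lin by (simp add: linear_simps u_def)
  have vSu: "inner v (S u) = inner u u" using sa unfolding selfadjoint_def u_def by metis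
  have "0 \<le> inner (v - t *\<^sub>R u) (S (v - t *\<^sub>R u))" by (rule nonneg)
  also have "\<dots> = inner v (S v) - 2 * t * inner u u + t\<^sup>2 * inner u (S u)"
    unfolding Su by (simp add: u_def[symmetric] inner_diff_left inner_diff_right vSu inner_commute[of u v]
        power2_eq_square algebra_simps)
  also have "\<dots> \<le> inner v (S v) - 2 * t * inner u u + t\<^sup>2 * (K * (norm u)\<^sup>2)"
    using numerical_range[of u] by (simp add: mult_left_mono)
  also have "\<dots> = inner v (S v) - (norm u)\<^sup>2 / K"
    using K by (simp add: t_def power2_norm_eq_inner[symmetric]) (simp add: power2_eq_square field_simps)
  finally show ?thesis
    using K by (simp add: u_def field_simps)
qed

lemma real_positive_norm_sq_bound:
  assumes S: "real_positive_op S"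
  obtains L where "L > 0" "\<And>v. (norm (S v))\<^sup>2 \<le> L * inner v (S v)"
proof
  have lin: "bounded_linear S" using S by (simp add: real_positive_op_def)
  show "onorm S + 1 > 0" using onorm_pos_le[OF lin] by simp
  have "inner w (S w) \<le> (onorm S + 1) * (norm w)\<^sup>2" for w
  proof -
    have "inner w (S w) \<le> norm w * norm (S w)" by (rule norm_cauchy_schwarz)
    also have "\<dots> \<le> norm w * (onorm S * norm w)" by (intro mult_left_mono onorm[OF lin]) simp
    also have "\<dots> \<le> (onorm S + 1) * (norm w)\<^sup>2" by (simp add: power2_eq_square algebra_simps)
    finally show ?thesis .
  qed
  with S \<open>onorm S + 1 > 0\<close> show "(norm (S v))\<^sup>2 \<le> (onorm S + 1) * inner v (S v)" for v
    by (rule real_positive_norm_sq_le)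
qed

lemma real_positive_diff_norm_sq_bound:
  assumes S: "real_positive_op S" and T: "real_positive_op T"
  obtains L where "L > 0" "\<And>u. (norm (S u - T u))\<^sup>2 \<le> L * inner u (S u + T u)"
proof -
  obtain LS where LS: "LS > 0" "\<And>v. (norm (S v))\<^sup>2 \<le> LS * inner v (S v)"
    using real_positive_norm_sq_bound[OF S] by blast
  obtain LT where LT: "LT > 0" "\<And>v. (norm (T v))\<^sup>2 \<le> LT * inner v (T v)"
    using real_positive_norm_sq_bound[OF T] by blast
  define L where "L = max LS LT"
  show thesis
  proof
    show "2 * L > 0" using LS by (simp add: L_def)
    fix u
    have "(norm (S u - T u))\<^sup>2 \<le> (norm (S u) + norm (T u))\<^sup>2"
      by (intro power_mono norm_triangle_ineq4) simp
    also have "\<dots> \<le> 2 * (norm (S u))\<^sup>2 + 2 * (norm (T u))\<^sup>2"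
      using zero_le_power2[of "norm (S u) - norm (T u)"] by (simp add: power2_eq_square algebra_simps)
    also have "\<dots> \<le> 2 * L * inner u (S u + T u)"
      using LS(2)[of u] LT(2)[of u] S T
        mult_right_mono[of LS L "inner u (S u)"] mult_right_mono[of LT L "inner u (T u)"]
      by (simp add: L_def inner_add_right real_positive_op_def algebra_simps)
    finally show "(norm (S u - T u))\<^sup>2 \<le> 2 * L * inner u (S u + T u)" .
  qed
qed

lemma anticommuting_inner_le:
  assumes "selfadjoint D" and K: "real_positive_op K" and anti: "\<And>x. K (D x) = - D (K x)"
  shows "\<mu> * inner u (K u) \<le> norm (K u) * norm (D (D u) - \<mu> *\<^sub>R u)"
proof -
  have "0 \<le> inner (D u) (K (D u))" using K by (simp add: real_positive_op_def)
  also have "\<dots> = inner u (D (K (D u)))" using assms(1) by (simp add: selfadjoint_def)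
  also have "\<dots> = - inner u (K (D (D u)))" by (simp add: anti)
  also have "\<dots> = - inner (K u) (D (D u))" using K by (simp add: real_positive_op_def selfadjoint_def)
  finally have "inner (K u) (D (D u)) \<le> 0" by simp
  moreover have "\<mu> * inner u (K u) = inner (K u) (D (D u)) - inner (K u) (D (D u) - \<mu> *\<^sub>R u)"
    by (simp add: inner_diff_right inner_commute)
  moreover have "- inner (K u) (D (D u) - \<mu> *\<^sub>R u) \<le> norm (K u) * norm (D (D u) - \<mu> *\<^sub>R u)"
    using norm_cauchy_schwarz[of "K u" "- (D (D u) - \<mu> *\<^sub>R u)"]
    by (simp only: inner_minus_right norm_minus_cancel)
  ultimately show ?thesis by linarith
qed

lemma selfadjoint_square_defect_le:
  assumes "selfadjoint D" and D: "\<And>x. norm (D x) \<le> \<nu> * norm x" and "norm u = 1"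
  shows "(norm (D (D u) - \<nu>\<^sup>2 *\<^sub>R u))\<^sup>2 \<le> \<nu>\<^sup>2 * (\<nu>\<^sup>2 - (norm (D u))\<^sup>2)"
proof -
  have "(norm (D (D u)))\<^sup>2 \<le> (\<nu> * norm (D u))\<^sup>2"
    using D[of "D u"] by (intro power_mono) simp_all
  then have DDu: "(norm (D (D u)))\<^sup>2 \<le> \<nu>\<^sup>2 * (norm (D u))\<^sup>2"
    by (simp add: power_mult_distrib)
  have inner_DDu: "inner (D (D u)) u = (norm (D u))\<^sup>2"
    using assms(1) by (simp add: selfadjoint_def power2_norm_eq_inner)
  have "(norm (D (D u) - \<nu>\<^sup>2 *\<^sub>R u))\<^sup>2
      = (norm (D (D u)))\<^sup>2 - 2 * \<nu>\<^sup>2 * inner (D (D u)) u + (\<nu>\<^sup>2)\<^sup>2 * inner u u"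
    unfolding power2_norm_eq_inner inner_diff_left inner_diff_right inner_scaleR_left inner_scaleR_right
      inner_commute[of u "D (D u)"]
    by (simp add: power2_eq_square algebra_simps)
  also have "\<dots> \<le> \<nu>\<^sup>2 * (\<nu>\<^sup>2 - (norm (D u))\<^sup>2)"
    using DDu \<open>norm u = 1\<close> by (simp add: inner_DDu power2_norm_eq_inner[symmetric] algebra_simps)
  finally show ?thesis .
qed

lemma onorm_sq_le_of_unit_bound:
  assumes "bounded_linear f" "0 \<le> b" and unit: "\<And>u. norm u = 1 \<Longrightarrow> (norm (f u))\<^sup>2 \<le> b"
  shows "(onorm f)\<^sup>2 \<le> b"
proof -
  have "norm (f x) \<le> sqrt b * norm x" for x
  proof (cases "x = 0")
    case True
    then show ?thesis using assms(1) by (simp add: linear_simps)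
  next
    case False
    have "norm (f x) = norm (f ((1 / norm x) *\<^sub>R x)) * norm x"
      using False assms(1) by (simp add: linear_simps)
    also have "\<dots> \<le> sqrt b * norm x"
      using unit[of "(1 / norm x) *\<^sub>R x"] False by (intro mult_right_mono) (simp_all add: real_le_rsqrt)
    finally show ?thesis .
  qed
  then have "onorm f \<le> sqrt b" using assms(2) by (intro onorm_bound) auto
  then have "(onorm f)\<^sup>2 \<le> (sqrt b)\<^sup>2" using onorm_pos_le[OF assms(1)] by (rule power_mono)
  with assms(2) show ?thesis by simp
qed

lemma positive_sqrt_difference_estimate:
  assumes S: "real_positive_op S" and T: "real_positive_op T" and sq: "S \<circ> S = T \<circ> T"
  defines "D \<equiv> \<lambda>x. S x - T x"
  obtains C where "C > 0"
    "\<And>u. norm u = 1 \<Longrightarrow>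
       ((onorm D)\<^sup>2 * (norm (D u))\<^sup>2)\<^sup>2 \<le> C * ((onorm D)\<^sup>2 * ((onorm D)\<^sup>2 - (norm (D u))\<^sup>2))"
proof -
  define K where "K x = S x + T x" for x
  have linS: "bounded_linear S" and linT: "bounded_linear T"
    using S T by (auto simp: real_positive_op_def)
  have linD: "bounded_linear D" unfolding D_def using linS linT by (rule bounded_linear_sub)
  have saD: "selfadjoint D"
    using S T by (simp add: real_positive_op_def selfadjoint_def D_def inner_diff_left inner_diff_right)
  have linK: "bounded_linear K" unfolding K_def[abs_def] using linS linT by (rule bounded_linear_add)
  with S T have K: "real_positive_op K"
    by (simp add: real_positive_op_def selfadjoint_def K_def inner_add_left inner_add_right)
  \<comment> \<open>S S = T T makes S + T and S - T anticommute\<close>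
  have anti: "K (D x) = - D (K x)" for x
    using linS linT fun_cong[OF sq, of x] by (simp add: K_def D_def linear_simps)
  obtain L where L: "L > 0" "\<And>u. (norm (D u))\<^sup>2 \<le> L * inner u (K u)"
    using real_positive_diff_norm_sq_bound[OF S T] unfolding D_def K_def by blast
  obtain LK where LK: "LK > 0" "\<And>x. norm (K x) \<le> norm x * LK"
    using bounded_linear.pos_bounded[OF linK] by blast
  define \<mu> where "\<mu> = (onorm D)\<^sup>2"
  show thesis
  proof
    show "L\<^sup>2 * LK\<^sup>2 > 0" using L LK by simp
    fix u :: 'a assume u: "norm u = 1"
    define y where "y = (norm (D u))\<^sup>2"
    define w where "w = D (D u) - \<mu> *\<^sub>R u"
    have "\<mu> * inner u (K u) \<le> norm (K u) * norm w"
      unfolding w_def by (rule anticommuting_inner_le[OF saD K anti])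
    also have "\<dots> \<le> LK * norm w" using LK(2)[of u] u by (simp add: mult_right_mono)
    finally have Kw: "\<mu> * inner u (K u) \<le> LK * norm w" .
    have "\<mu> * y \<le> L * (\<mu> * inner u (K u))"
      using mult_left_mono[OF L(2)[of u], of \<mu>] by (simp add: \<mu>_def y_def algebra_simps)
    also have "\<dots> \<le> L * (LK * norm w)" using Kw L by simp
    finally have "(\<mu> * y)\<^sup>2 \<le> (L * (LK * norm w))\<^sup>2"
      by (intro power_mono) (simp_all add: \<mu>_def y_def)
    also have "\<dots> = L\<^sup>2 * LK\<^sup>2 * (norm w)\<^sup>2" by (simp add: power_mult_distrib)
    also have "\<dots> \<le> L\<^sup>2 * LK\<^sup>2 * (\<mu> * (\<mu> - y))"
      using selfadjoint_square_defect_le[OF saD onorm[OF linD] u]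
      by (intro mult_left_mono) (auto simp: w_def \<mu>_def y_def mult.commute)
    finally show "((onorm D)\<^sup>2 * (norm (D u))\<^sup>2)\<^sup>2 \<le>
        L\<^sup>2 * LK\<^sup>2 * ((onorm D)\<^sup>2 * ((onorm D)\<^sup>2 - (norm (D u))\<^sup>2))"
      by (simp add: \<mu>_def y_def)
  qed
qed

theorem real_positive_sqrt_unique:
  assumes S: "real_positive_op S" and T: "real_positive_op T" and sq: "S \<circ> S = T \<circ> T"
  shows "S = T"
proof (rule ccontr)
  define D where "D x = S x - T x" for x
  have linD: "bounded_linear D"
    unfolding D_def[abs_def] using S T by (intro bounded_linear_sub) (auto simp: real_positive_op_def)
  assume "S \<noteq> T"
  then have "0 < onorm D" using onorm_pos_lt[OF linD] by (auto simp: D_def fun_eq_iff)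
  define \<mu> where "\<mu> = (onorm D)\<^sup>2"
  have \<mu>: "\<mu> > 0" using \<open>0 < onorm D\<close> by (simp add: \<mu>_def)
  obtain C where C: "C > 0"
    and estimate: "\<And>u. norm u = 1 \<Longrightarrow> (\<mu> * (norm (D u))\<^sup>2)\<^sup>2 \<le> C * (\<mu> * (\<mu> - (norm (D u))\<^sup>2))"
    using positive_sqrt_difference_estimate[OF S T sq] unfolding \<mu>_def D_def[abs_def] by blast
  \<comment> \<open>the estimate keeps every unit vector uniformly away from the norm of D\<close>
  define \<theta> where "\<theta> = max (\<mu> / 2) (\<mu> - \<mu> ^ 3 / (4 * C))"
  have "(norm (D u))\<^sup>2 \<le> \<theta>" if u: "norm u = 1" for u
  proof (cases "(norm (D u))\<^sup>2 \<le> \<mu> / 2")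
    case False
    define y where "y = (norm (D u))\<^sup>2"
    have "\<mu> * (\<mu> * y\<^sup>2) \<le> \<mu> * (C * (\<mu> - y))"
      using estimate[OF u] unfolding y_def by (simp add: power_mult_distrib power2_eq_square ac_simps)
    then have y_bound: "\<mu> * y\<^sup>2 \<le> C * (\<mu> - y)" using \<mu> by (rule mult_left_le_imp_le)
    have "(\<mu> / 2)\<^sup>2 \<le> y\<^sup>2" using False \<mu> by (intro power_mono) (simp_all add: y_def)
    then have "\<mu> * (\<mu> / 2)\<^sup>2 \<le> \<mu> * y\<^sup>2" using \<mu> by simp
    also note y_bound
    finally have "y \<le> \<mu> - \<mu> ^ 3 / (4 * C)"
      using C by (simp add: field_simps power2_eq_square power3_eq_cube)
    then show ?thesis by (simp add: \<theta>_def y_def)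
  qed (simp add: \<theta>_def)
  then have "\<mu> \<le> \<theta>"
    unfolding \<mu>_def using \<mu> by (intro onorm_sq_le_of_unit_bound linD) (auto simp: \<theta>_def)
  moreover have "\<theta> < \<mu>" using \<mu> C by (simp add: \<theta>_def)
  ultimately show False by simp
qed

lemma op_sqrt_eqI:
  assumes "positive_op R" and "R \<circ> R = T"
  shows "op_sqrt T = R"
  unfolding op_sqrt_def
proof (rule the_equality)
  show "positive_op R \<and> R \<circ> R = T" using assms by simp
  fix S assume "positive_op S \<and> S \<circ> S = T"
  then show "S = R"
    using assms by (intro real_positive_sqrt_unique[of S R]) (auto simp: positive_op_iff_real_positive_op)
qed


section \<open>Power series in a bounded operator\<close>

definition op_series :: "('a::real_normed_vector \<Rightarrow> 'a) \<Rightarrow> (nat \<Rightarrow> real) \<Rightarrow> 'a \<Rightarrow> 'a" where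
  "op_series E a x = (\<Sum>n. a n *\<^sub>R (E ^^ n) x)"

definition coeff_conv :: "(nat \<Rightarrow> real) \<Rightarrow> (nat \<Rightarrow> real) \<Rightarrow> nat \<Rightarrow> real" where
  "coeff_conv a b k = (\<Sum>i\<le>k. a i * b (k - i))"

lemma summable_coeff_conv:
  fixes r :: real
  assumes r: "0 \<le> r"
    and a: "summable (\<lambda>n. \<bar>a n\<bar> * r ^ n)" and b: "summable (\<lambda>n. \<bar>b n\<bar> * r ^ n)"
  shows "summable (\<lambda>n. \<bar>coeff_conv a b n\<bar> * r ^ n)"
proof -
  have "summable (\<lambda>k. \<Sum>i\<le>k. (\<bar>a i\<bar> * r ^ i) * (\<bar>b (k - i)\<bar> * r ^ (k - i)))"
    using a b r by (intro summable_Cauchy_product) simp_all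
  then show ?thesis
  proof (rule summable_comparison_test[rotated], intro exI allI impI)
    fix k :: nat
    have "norm (\<bar>coeff_conv a b k\<bar> * r ^ k) \<le> (\<Sum>i\<le>k. \<bar>a i * b (k - i)\<bar>) * r ^ k"
      unfolding coeff_conv_def using r by (simp add: mult_right_mono sum_abs)
    also have "\<dots> = (\<Sum>i\<le>k. (\<bar>a i\<bar> * r ^ i) * (\<bar>b (k - i)\<bar> * r ^ (k - i)))"
      unfolding sum_distrib_right
      by (intro sum.cong refl) (simp add: abs_mult power_add[symmetric] algebra_simps)
    finally show "norm (\<bar>coeff_conv a b k\<bar> * r ^ k) \<le> \<dots>" .
  qed
qed

lemma has_sum_antidiagonals:
  fixes f :: "nat \<times> nat \<Rightarrow> 'a::banach"
  assumes "(f has_sum S) UNIV"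
  shows "((\<lambda>k. \<Sum>i\<le>k. f (i, k - i)) has_sum S) UNIV"
proof -
  have "((\<lambda>q. f (snd q, fst q - snd q)) has_sum S) (SIGMA k:UNIV. {..k}) \<longleftrightarrow> (f has_sum S) UNIV"
    by (rule has_sum_reindex_bij_witness[where i = "\<lambda>p. (fst p + snd p, fst p)"
          and j = "\<lambda>q. (snd q, fst q - snd q)"]) auto
  with assms have "((\<lambda>q. f (snd q, fst q - snd q)) has_sum S) (SIGMA k:UNIV. {..k})" by simp
  then show ?thesis
  proof (rule has_sum_Sigma[OF isUCont_plus])
    fix k :: nat
    have "((\<lambda>i. f (i, k - i)) has_sum (\<Sum>i\<le>k. f (i, k - i))) {..k}"
      by (rule has_sum_finiteI) auto
    then show "((\<lambda>i. f (snd (k, i), fst (k, i) - snd (k, i))) has_sum (\<Sum>i\<le>k. f (i, k - i))) {..k}"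
      by simp
  qed
qed

lemma bounded_linear_funpow:
  fixes E :: "'a::real_normed_vector \<Rightarrow> 'a"
  assumes "bounded_linear E"
  shows "bounded_linear (E ^^ n)"
proof (induction n)
  case (Suc n)
  have "bounded_linear (\<lambda>x. E ((E ^^ n) x))" by (rule bounded_linear_compose[OF assms Suc.IH])
  then show ?case by (simp add: o_def)
qed (simp add: id_def)

lemma funpow_commute_apply:
  fixes E :: "'a \<Rightarrow> 'a"
  shows "(\<And>x. C (E x) = E (C x)) \<Longrightarrow> C ((E ^^ n) x) = (E ^^ n) (C x)"
  by (induction n) simp_all

lemma selfadjoint_funpow:
  assumes "selfadjoint E"
  shows "selfadjoint (E ^^ n)"
  unfolding selfadjoint_def
proof (induction n)
  case (Suc n)
  show ?case
  proof (intro allI)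
    fix x y
    have "inner ((E ^^ Suc n) x) y = inner ((E ^^ n) x) (E y)"
      using assms by (simp add: selfadjoint_def)
    also have "\<dots> = inner x ((E ^^ n) (E y))" using Suc by blast
    finally show "inner ((E ^^ Suc n) x) y = inner x ((E ^^ Suc n) y)" by (simp add: funpow_swap1)
  qed
qed simp

locale op_norm_le =
  fixes E :: "'a::banach \<Rightarrow> 'a" and r :: real
  assumes bounded_linear: "bounded_linear E" and nonneg: "0 \<le> r"
    and norm_le: "\<And>x. norm (E x) \<le> r * norm x"
begin

lemma norm_funpow_le: "norm ((E ^^ n) x) \<le> r ^ n * norm x"
proof (induction n)
  case (Suc n)
  have "norm ((E ^^ Suc n) x) \<le> r * norm ((E ^^ n) x)" using norm_le by simp
  also have "\<dots> \<le> r * (r ^ n * norm x)" using Suc nonneg by (simp add: mult_left_mono)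
  finally show ?case by simp
qed simp

lemma norm_op_series_term_le: "norm (c *\<^sub>R (E ^^ n) x) \<le> (\<bar>c\<bar> * r ^ n) * norm x"
  using norm_funpow_le[of n x] by (simp add: mult_left_mono mult.assoc)

context
  fixes a :: "nat \<Rightarrow> real"
  assumes a: "summable (\<lambda>n. \<bar>a n\<bar> * r ^ n)"
begin

lemma summable_norm_op_series: "summable (\<lambda>n. norm (a n *\<^sub>R (E ^^ n) x))"
proof (rule summable_comparison_test)
  show "\<exists>N. \<forall>n\<ge>N. norm (norm (a n *\<^sub>R (E ^^ n) x)) \<le> \<bar>a n\<bar> * r ^ n * norm x"
    using norm_op_series_term_le by (simp del: norm_scaleR)
qed (rule summable_mult2[OF a])

lemma op_series_sums: "(\<lambda>n. a n *\<^sub>R (E ^^ n) x) sums op_series E a x"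
  unfolding op_series_def by (rule summable_sums[OF summable_norm_cancel[OF summable_norm_op_series]])

lemma op_series_has_sum: "((\<lambda>n. a n *\<^sub>R (E ^^ n) x) has_sum op_series E a x) UNIV"
  by (rule norm_summable_imp_has_sum[OF summable_norm_op_series op_series_sums])

lemma bounded_linear_op_series: "bounded_linear (op_series E a)"
proof (rule bounded_linear_intro)
  have lin: "bounded_linear (E ^^ n)" for n using bounded_linear by (rule bounded_linear_funpow)
  fix x y
  have "(\<lambda>n. a n *\<^sub>R (E ^^ n) (x + y)) sums (op_series E a x + op_series E a y)"
    using sums_add[OF op_series_sums[of x] op_series_sums[of y]] lin
    by (simp add: linear_simps scaleR_add_right)
  then show "op_series E a (x + y) = op_series E a x + op_series E a y"
    by (rule sums_unique2[OF op_series_sums])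
next
  have lin: "bounded_linear (E ^^ n)" for n using bounded_linear by (rule bounded_linear_funpow)
  fix c x
  have "(\<lambda>n. a n *\<^sub>R (E ^^ n) (c *\<^sub>R x)) sums (c *\<^sub>R op_series E a x)"
    using sums_scaleR_right[OF op_series_sums[of x], of c] lin by (simp add: linear_simps mult.commute)
  then show "op_series E a (c *\<^sub>R x) = c *\<^sub>R op_series E a x"
    by (rule sums_unique2[OF op_series_sums])
next
  fix x
  have "norm (op_series E a x) \<le> (\<Sum>n. norm (a n *\<^sub>R (E ^^ n) x))"
    unfolding op_series_def by (intro summable_norm summable_norm_op_series)
  also have "\<dots> \<le> (\<Sum>n. (\<bar>a n\<bar> * r ^ n) * norm x)"
    by (intro suminf_le summable_norm_op_series summable_mult2 a norm_op_series_term_le)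
  also have "\<dots> = norm x * (\<Sum>n. \<bar>a n\<bar> * r ^ n)"
    using suminf_mult2[OF a, of "norm x"] by (simp add: mult.commute)
  finally show "norm (op_series E a x) \<le> norm x * (\<Sum>n. \<bar>a n\<bar> * r ^ n)" .
qed

lemma op_series_commute:
  assumes "bounded_linear C" and "\<And>x. C (E x) = E (C x)"
  shows "C (op_series E a x) = op_series E a (C x)"
proof -
  have "C (op_series E a x) = (\<Sum>n. C (a n *\<^sub>R (E ^^ n) x))"
    unfolding op_series_def
    by (rule bounded_linear.suminf[OF assms(1) summable_norm_cancel[OF summable_norm_op_series]])
  also have "\<dots> = op_series E a (C x)"
    unfolding op_series_def using assms by (simp add: linear_simps funpow_commute_apply)
  finally show ?thesis .
qed

end

lemma op_series_product_summable_on: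
  assumes a: "summable (\<lambda>n. \<bar>a n\<bar> * r ^ n)" and b: "summable (\<lambda>n. \<bar>b n\<bar> * r ^ n)"
  shows "(\<lambda>p. (a (fst p) * b (snd p)) *\<^sub>R (E ^^ (fst p + snd p)) x) summable_on UNIV \<times> UNIV"
proof -
  define g where "g p = (\<bar>a (fst p)\<bar> * r ^ fst p) * (\<bar>b (snd p)\<bar> * r ^ snd p) * norm x" for p
  have b_sum: "((\<lambda>n. \<bar>b n\<bar> * r ^ n) has_sum (\<Sum>n. \<bar>b n\<bar> * r ^ n)) UNIV"
    using nonneg by (intro sums_nonneg_imp_has_sum summable_sums b) auto
  have a_sum: "((\<lambda>n. \<bar>a n\<bar> * r ^ n) has_sum (\<Sum>n. \<bar>a n\<bar> * r ^ n)) UNIV"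
    using nonneg by (intro sums_nonneg_imp_has_sum summable_sums a) auto
  have "g summable_on UNIV \<times> UNIV"
  proof (rule summable_on_SigmaI)
    fix i :: nat
    show "((\<lambda>j. g (i, j)) has_sum (\<bar>a i\<bar> * r ^ i) * (\<Sum>n. \<bar>b n\<bar> * r ^ n) * norm x) UNIV"
      unfolding g_def fst_conv snd_conv by (intro has_sum_cmult_left has_sum_cmult_right b_sum)
  next
    show "(\<lambda>i. (\<bar>a i\<bar> * r ^ i) * (\<Sum>n. \<bar>b n\<bar> * r ^ n) * norm x) summable_on UNIV"
      using has_sum_cmult_left[OF has_sum_cmult_left[OF a_sum], of _ "norm x"]
      by (auto simp: summable_on_def)
  next
    fix i j :: nat
    show "0 \<le> g (i, j)" unfolding g_def using nonneg by simp
  qed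
  then have "(\<lambda>p. norm ((a (fst p) * b (snd p)) *\<^sub>R (E ^^ (fst p + snd p)) x)) summable_on UNIV \<times> UNIV"
  proof (rule Infinite_Sum.abs_summable_on_comparison_test')
    fix p :: "nat \<times> nat"
    show "norm ((a (fst p) * b (snd p)) *\<^sub>R (E ^^ (fst p + snd p)) x) \<le> g p"
      using norm_op_series_term_le[of "a (fst p) * b (snd p)" "fst p + snd p" x]
      by (simp add: g_def abs_mult power_add algebra_simps)
  qed
  then show ?thesis by (rule abs_summable_summable)
qed

lemma op_series_mult:
  assumes a: "summable (\<lambda>n. \<bar>a n\<bar> * r ^ n)" and b: "summable (\<lambda>n. \<bar>b n\<bar> * r ^ n)"
  shows "op_series E a (op_series E b x) = op_series E (coeff_conv a b) x"
proof -
  define f where "f p = (a (fst p) * b (snd p)) *\<^sub>R (E ^^ (fst p + snd p)) x" for p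
  define S where "S = infsum f (UNIV \<times> UNIV)"
  have f_sum: "(f has_sum S) (UNIV \<times> UNIV)"
    unfolding S_def f_def[abs_def] using op_series_product_summable_on[OF a b] by (rule has_sum_infsum)
  have "((\<lambda>i. a i *\<^sub>R (E ^^ i) (op_series E b x)) has_sum S) UNIV"
  proof (rule has_sum_Sigma[OF isUCont_plus f_sum])
    fix i :: nat
    have lin: "bounded_linear (\<lambda>v. a i *\<^sub>R (E ^^ i) v)"
      by (intro bounded_linear_scaleR_right[THEN bounded_linear_compose] bounded_linear_funpow bounded_linear)
    have "((\<lambda>j. a i *\<^sub>R (E ^^ i) (b j *\<^sub>R (E ^^ j) x)) has_sum a i *\<^sub>R (E ^^ i) (op_series E b x)) UNIV"
      by (rule has_sum_bounded_linear[OF lin op_series_has_sum[OF b]])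
    moreover have "a i *\<^sub>R (E ^^ i) (b j *\<^sub>R (E ^^ j) x) = f (i, j)" for j
      using bounded_linear_funpow[OF bounded_linear, of i] by (simp add: f_def linear_simps funpow_add)
    ultimately show "((\<lambda>j. f (i, j)) has_sum a i *\<^sub>R (E ^^ i) (op_series E b x)) UNIV" by simp
  qed
  then have rows: "S = op_series E a (op_series E b x)"
    using op_series_sums[OF a] has_sum_imp_sums sums_unique2 by blast
  have "((\<lambda>k. \<Sum>i\<le>k. f (i, k - i)) has_sum S) UNIV"
    using has_sum_antidiagonals f_sum by simp
  moreover have "(\<Sum>i\<le>k. f (i, k - i)) = coeff_conv a b k *\<^sub>R (E ^^ k) x" for k
    unfolding coeff_conv_def scaleR_sum_left f_def by (intro sum.cong refl) simp
  ultimately have "((\<lambda>k. coeff_conv a b k *\<^sub>R (E ^^ k) x) has_sum S) UNIV" by simp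
  then have diagonals: "S = op_series E (coeff_conv a b) x"
    using op_series_sums[OF summable_coeff_conv[OF nonneg a b]] has_sum_imp_sums sums_unique2 by blast
  show ?thesis using rows diagonals by simp
qed

end

lemma selfadjoint_op_series:
  fixes E :: "'a::{real_inner, banach} \<Rightarrow> 'a"
  assumes "op_norm_le E r" and a: "summable (\<lambda>n. \<bar>a n\<bar> * r ^ n)" and "selfadjoint E"
  shows "selfadjoint (op_series E a)"
  unfolding selfadjoint_def
proof (intro allI)
  fix x y
  have funpow_sym: "inner ((E ^^ n) x) y = inner x ((E ^^ n) y)" for n
    using selfadjoint_funpow[OF \<open>selfadjoint E\<close>] by (simp add: selfadjoint_def)
  have summable: "summable (\<lambda>n. a n *\<^sub>R (E ^^ n) z)" for z
    using op_norm_le.op_series_sums[OF assms(1) a] by (rule sums_summable)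
  have "inner (op_series E a x) y = (\<Sum>n. inner (a n *\<^sub>R (E ^^ n) x) y)"
    unfolding op_series_def by (rule bounded_linear.suminf[OF bounded_linear_inner_left summable])
  also have "\<dots> = (\<Sum>n. inner x (a n *\<^sub>R (E ^^ n) y))"
    by (simp add: funpow_sym)
  also have "\<dots> = inner x (op_series E a y)"
    unfolding op_series_def
    by (rule bounded_linear.suminf[OF bounded_linear_inner_right summable, symmetric])
  finally show "inner (op_series E a x) y = inner x (op_series E a y)" .
qed


section \<open>Real powers of coercive operators\<close>

lemma summable_abs_gbinomial:
  fixes r :: real
  assumes "0 \<le> r" "r < 1"
  shows "summable (\<lambda>n. \<bar>\<alpha> gchoose n\<bar> * r ^ n)"
proof -
  have "ereal (norm r) < conv_radius (\<lambda>n. \<alpha> gchoose n)"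
    using assms by (simp add: conv_radius_gchoose)
  from abs_summable_in_conv_radius[OF this] show ?thesis
    using assms by (simp add: abs_mult)
qed

lemma coeff_conv_gbinomial:
  "coeff_conv (\<lambda>n. \<alpha> gchoose n) (\<lambda>n. \<beta> gchoose n) = (\<lambda>n. (\<alpha> + \<beta>) gchoose n :: real)"
  by (rule ext) (simp add: coeff_conv_def gbinomial_Vandermonde[symmetric] atLeast0AtMost)

lemma gbinomial_1_left: "(1::real) gchoose n = (if n \<le> 1 then 1 else 0)"
proof -
  have "(1::real) gchoose n = of_nat (1 choose n)" by (metis binomial_gbinomial of_nat_1)
  then show ?thesis by (cases n) (auto simp: binomial_eq_0)
qed

lemma coercive_if_positive_invertible:
  assumes "positive_op A" and "invertible_op A"
  obtains c where "c > 0" "\<And>x. c * (norm x)\<^sup>2 \<le> inner x (A x)"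
proof -
  obtain A' where A': "bounded_op A'" "A' \<circ> A = id"
    using assms(2) by (auto simp: invertible_op_def)
  obtain K where K: "K > 0" "\<And>x. norm (A' x) \<le> norm x * K"
    using bounded_linear.pos_bounded[of A'] A'(1) by (auto simp: bounded_op_def)
  obtain L where L: "L > 0" "\<And>x. (norm (A x))\<^sup>2 \<le> L * inner x (A x)"
    using real_positive_norm_sq_bound assms(1) by (auto simp: positive_op_iff_real_positive_op)
  show thesis
  proof
    show "1 / (K\<^sup>2 * L) > 0" using K L by simp
    fix x
    have "norm x \<le> norm (A x) * K"
      using K(2)[of "A x"] pointfree_idE[OF A'(2)] by simp
    then have "(norm x)\<^sup>2 \<le> K\<^sup>2 * (norm (A x))\<^sup>2"
      by (metis norm_ge_zero power_mono power_mult_distrib mult.commute)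
    also have "\<dots> \<le> K\<^sup>2 * (L * inner x (A x))" using L(2)[of x] by (intro mult_left_mono) auto
    finally show "1 / (K\<^sup>2 * L) * (norm x)\<^sup>2 \<le> inner x (A x)"
      using K L by (simp add: field_simps)
  qed
qed

locale coercive_op =
  fixes P :: "'a::complex_hilbert \<Rightarrow> 'a" and c :: real
  assumes bounded_op: "bounded_op P" and selfadjoint: "selfadjoint P" and pos: "0 < c"
    and coercive: "\<And>x. c * (norm x)\<^sup>2 \<le> inner x (P x)"
begin

definition scale :: real where "scale = onorm P + 2 * c"
definition shift :: "'a \<Rightarrow> 'a" where "shift x = (1 / scale) *\<^sub>R P x - x"
definition radius :: real where "radius = 1 - c / scale"

lemma bounded_linear_P: "bounded_linear P"
  using bounded_op by (simp add: bounded_op_def)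

lemma scale_pos: "scale > 0"
  using onorm_pos_le[OF bounded_linear_P] pos by (simp add: scale_def)

lemma radius_pos: "radius > 0" and radius_less_1: "radius < 1"
  using onorm_pos_le[OF bounded_linear_P] pos scale_pos by (auto simp: radius_def scale_def field_simps)

lemma bounded_linear_shift: "bounded_linear shift"
  unfolding shift_def[abs_def]
  by (intro bounded_linear_sub bounded_linear_ident
      bounded_linear_scaleR_right[THEN bounded_linear_compose] bounded_linear_P)

lemma inner_le_scale: "inner w (P w) \<le> scale * (norm w)\<^sup>2"
proof -
  have "inner w (P w) \<le> norm w * norm (P w)" by (rule norm_cauchy_schwarz)
  also have "\<dots> \<le> norm w * (onorm P * norm w)"
    by (intro mult_left_mono onorm[OF bounded_linear_P]) simp
  also have "\<dots> \<le> scale * (norm w)\<^sup>2"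
    using pos by (simp add: scale_def power2_eq_square algebra_simps)
  finally show ?thesis .
qed

lemma norm_shift_le: "norm (shift x) \<le> radius * norm x"
proof -
  define S where "S x = - shift x" for x
  have inner_S: "inner w (S w) = (norm w)\<^sup>2 - inner w (P w) / scale" for w
    by (simp add: S_def shift_def inner_diff_right power2_norm_eq_inner)
  have "0 \<le> inner w (S w)" for w
    using inner_le_scale[of w] scale_pos by (simp add: inner_S field_simps)
  moreover have "bounded_linear S"
    unfolding S_def[abs_def] by (intro bounded_linear_minus bounded_linear_shift)
  moreover have "selfadjoint S"
    using selfadjoint by (simp add: selfadjoint_def S_def shift_def inner_diff_left inner_diff_right)
  ultimately have S: "real_positive_op S" by (simp add: real_positive_op_def)
  have S_le: "inner w (S w) \<le> radius * (norm w)\<^sup>2" for w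
    using divide_right_mono[OF coercive[of w], of scale] scale_pos
    by (simp add: inner_S radius_def algebra_simps)
  have "(norm (S x))\<^sup>2 \<le> radius * inner x (S x)"
    by (rule real_positive_norm_sq_le[OF S radius_pos S_le])
  also have "\<dots> \<le> (radius * norm x)\<^sup>2"
    using mult_left_mono[OF S_le[of x], of radius] radius_pos by (simp add: power2_eq_square ac_simps)
  finally have "(norm (shift x))\<^sup>2 \<le> (radius * norm x)\<^sup>2" by (simp add: S_def)
  then show ?thesis using radius_pos by (simp add: power2_le_iff_abs_le)
qed

sublocale op_norm_le shift radius
  by (rule op_norm_le.intro[OF bounded_linear_shift less_imp_le[OF radius_pos] norm_shift_le])

text \<open>With P = scale (I + shift) and the norm of shift below 1, the real powers of P are
  binomial series in shift.\<close>

definition op_powr :: "real \<Rightarrow> 'a \<Rightarrow> 'a" where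
  "op_powr \<alpha> x = scale powr \<alpha> *\<^sub>R op_series shift (\<lambda>n. \<alpha> gchoose n) x"

lemma summable_gbinomial_radius: "summable (\<lambda>n. \<bar>\<alpha> gchoose n\<bar> * radius ^ n)"
  using radius_pos radius_less_1 by (intro summable_abs_gbinomial) auto

lemma bounded_linear_op_powr: "bounded_linear (op_powr \<alpha>)"
  unfolding op_powr_def[abs_def]
  by (intro bounded_linear_scaleR_right[THEN bounded_linear_compose] bounded_linear_op_series
      summable_gbinomial_radius)

lemma op_powr_add: "op_powr \<alpha> (op_powr \<beta> x) = op_powr (\<alpha> + \<beta>) x"
proof -
  have "op_powr \<alpha> (op_powr \<beta> x) =
      (scale powr \<alpha> * scale powr \<beta>) *\<^sub>R
        op_series shift (\<lambda>n. \<alpha> gchoose n) (op_series shift (\<lambda>n. \<beta> gchoose n) x)"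
    unfolding op_powr_def using bounded_linear_op_series[OF summable_gbinomial_radius, of \<alpha>]
    by (simp add: linear_simps)
  also have "\<dots> = op_powr (\<alpha> + \<beta>) x"
    unfolding op_powr_def op_series_mult[OF summable_gbinomial_radius summable_gbinomial_radius]
      coeff_conv_gbinomial powr_add by simp
  finally show ?thesis .
qed

lemma op_powr_0: "op_powr 0 x = x"
proof -
  have "op_series shift (\<lambda>n. 0 gchoose n) x = (\<Sum>n\<in>{0}. (0 gchoose n) *\<^sub>R (shift ^^ n) x)"
    unfolding op_series_def by (rule suminf_finite) (auto simp: gbinomial_0_left)
  then show ?thesis using scale_pos by (simp add: op_powr_def)
qed

lemma op_powr_1: "op_powr 1 x = P x"
proof -
  have "op_series shift (\<lambda>n. 1 gchoose n) x = (\<Sum>n\<in>{0, 1}. (1 gchoose n) *\<^sub>R (shift ^^ n) x)"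
    unfolding op_series_def by (rule suminf_finite) (auto simp: gbinomial_1_left)
  also have "\<dots> = (1 / scale) *\<^sub>R P x" by (simp add: shift_def)
  finally show ?thesis using scale_pos by (simp add: op_powr_def)
qed

lemma op_powr_apply: "op_powr \<alpha> (P x) = op_powr (\<alpha> + 1) x"
  using op_powr_add[of \<alpha> 1 x] by (simp add: op_powr_1)

lemma selfadjoint_op_powr: "selfadjoint (op_powr \<alpha>)"
proof -
  have "selfadjoint shift"
    using selfadjoint by (simp add: selfadjoint_def shift_def inner_diff_left inner_diff_right)
  then have "selfadjoint (op_series shift (\<lambda>n. \<alpha> gchoose n))"
    by (intro selfadjoint_op_series[OF op_norm_le_axioms summable_gbinomial_radius])
  then show ?thesis by (simp add: selfadjoint_def op_powr_def)
qed

lemma op_powr_commute: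
  assumes "bounded_linear C" and "C \<circ> P = P \<circ> C"
  shows "C \<circ> op_powr \<alpha> = op_powr \<alpha> \<circ> C"
proof -
  have "C (P x) = P (C x)" for x using fun_cong[OF assms(2), of x] by simp
  with assms(1) have "C (shift x) = shift (C x)" for x by (simp add: shift_def linear_simps)
  then show ?thesis
    using assms(1) op_series_commute[OF summable_gbinomial_radius assms(1)]
    by (simp add: fun_eq_iff op_powr_def linear_simps)
qed

lemma positive_op_op_powr: "positive_op (op_powr \<alpha>)"
  unfolding positive_op_iff_real_positive_op real_positive_op_def
proof (intro conjI allI)
  show "bounded_op (op_powr \<alpha>)"
    unfolding bounded_op_def
  proof (intro conjI allI bounded_linear_op_powr)
    fix c x
    have "cscale c \<circ> P = P \<circ> cscale c" using bounded_op by (auto simp: bounded_op_def)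
    then have "cscale c \<circ> op_powr \<alpha> = op_powr \<alpha> \<circ> cscale c"
      by (rule op_powr_commute[OF bounded_linear_cscale])
    then show "op_powr \<alpha> (cscale c x) = cscale c (op_powr \<alpha> x)" by (simp add: fun_eq_iff)
  qed
  show "bounded_linear (op_powr \<alpha>)" "selfadjoint (op_powr \<alpha>)"
    by (rule bounded_linear_op_powr selfadjoint_op_powr)+
  fix x
  have "0 \<le> inner (op_powr (\<alpha> / 2) x) (op_powr (\<alpha> / 2) x)" by simp
  also have "\<dots> = inner x (op_powr (\<alpha> / 2) (op_powr (\<alpha> / 2) x))"
    using selfadjoint_op_powr[of "\<alpha> / 2"] by (simp add: selfadjoint_def)
  also have "\<dots> = inner x (op_powr \<alpha> x)" by (simp add: op_powr_add)
  finally show "0 \<le> inner x (op_powr \<alpha> x)" .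
qed

lemma bounded_op_op_powr: "bounded_op (op_powr \<alpha>)"
  using positive_op_op_powr by (simp add: positive_op_def)

lemma op_sqrt_eq_op_powr: "op_sqrt P = op_powr (1 / 2)"
  by (rule op_sqrt_eqI[OF positive_op_op_powr]) (simp add: fun_eq_iff op_powr_add op_powr_1)

lemma inv_op_sqrt_eq_op_powr: "inv (op_sqrt P) = op_powr (- 1 / 2)"
  unfolding op_sqrt_eq_op_powr
  by (rule inv_unique_comp) (simp_all add: fun_eq_iff op_powr_add op_powr_0)

end


section \<open>Operator block matrices\<close>

lemma block_apply [simp]: "block P Q R S (x, y) = (P x + Q y, R x + S y)"
  by (simp add: block_def)

lemma bounded_op_block:
  assumes "bounded_op P" "bounded_op Q" "bounded_op R" "bounded_op S"
  shows "bounded_op (block P Q R S)"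
proof -
  have lin: "bounded_linear P" "bounded_linear Q" "bounded_linear R" "bounded_linear S"
    using assms by (auto simp: bounded_op_def)
  have "block P Q R S = (\<lambda>z. (P (fst z) + Q (snd z), R (fst z) + S (snd z)))"
    by (auto simp: block_def fun_eq_iff)
  moreover have "bounded_linear (\<lambda>z. (P (fst z) + Q (snd z), R (fst z) + S (snd z)))"
    by (intro bounded_linear_Pair bounded_linear_add
        bounded_linear_compose[OF lin(1) bounded_linear_fst] bounded_linear_compose[OF lin(2) bounded_linear_snd]
        bounded_linear_compose[OF lin(3) bounded_linear_fst] bounded_linear_compose[OF lin(4) bounded_linear_snd])
  moreover have "block P Q R S (cscale c z) = cscale c (block P Q R S z)" for c z
    using assms by (cases z) (simp add: cscale_prod_def bounded_op_def cscale_add_right)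
  ultimately show ?thesis by (simp add: bounded_op_def)
qed

lemma positive_op_block_lower_right:
  assumes "bounded_op B" and "bounded_linear Xs" and M: "positive_op (block A X Xs B)"
  shows "positive_op B"
proof -
  have "real_positive_op (block A X Xs B)" using M by (simp add: positive_op_iff_real_positive_op)
  then have "selfadjoint (block A X Xs B)" and M_nonneg: "\<And>z. 0 \<le> inner z (block A X Xs B z)"
    unfolding real_positive_op_def by blast+
  then have "inner (block A X Xs B (0, x)) (0, y) = inner (0, x) (block A X Xs B (0, y))" for x y
    by (simp only: selfadjoint_def)
  moreover have "Xs 0 = 0" using assms(2) by (rule linear_simps)
  ultimately have "selfadjoint B" by (simp add: selfadjoint_def inner_prod_def)
  moreover have "0 \<le> inner x (B x)" for x
    using M_nonneg[of "(0, x)"] \<open>Xs 0 = 0\<close> by (simp add: inner_prod_def)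
  ultimately show ?thesis
    using assms(1) by (simp add: positive_op_iff_real_positive_op real_positive_op_def bounded_op_def)
qed

lemma comp_add_commute:
  assumes "bounded_linear C" "C \<circ> F = F \<circ> C" "C \<circ> G = G \<circ> C"
  shows "C \<circ> (\<lambda>x. F x + G x) = (\<lambda>x. F x + G x) \<circ> C"
  using assms by (simp add: fun_eq_iff linear_simps)

lemma block_diag_comp:
  "block F (\<lambda>_. 0) (\<lambda>_. 0) F \<circ> block G (\<lambda>_. 0) (\<lambda>_. 0) G = block (F \<circ> G) (\<lambda>_. 0) (\<lambda>_. 0) (F \<circ> G)"
  by (auto simp: fun_eq_iff)

lemma block_diag_commute:
  assumes "bounded_linear F"
    and "F \<circ> A = A \<circ> F" "F \<circ> X = X \<circ> F" "F \<circ> Xs = Xs \<circ> F" "F \<circ> B = B \<circ> F"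
  shows "block F (\<lambda>_. 0) (\<lambda>_. 0) F \<circ> block A X Xs B = block A X Xs B \<circ> block F (\<lambda>_. 0) (\<lambda>_. 0) F"
proof -
  have "F (A x) = A (F x)" "F (X x) = X (F x)" "F (Xs x) = Xs (F x)" "F (B x) = B (F x)" for x
    using assms(2-5) unfolding fun_eq_iff comp_def by simp_all
  with assms(1) show ?thesis by (simp add: fun_eq_iff linear_simps)
qed

lemma selfadjoint_block_diag: "selfadjoint F \<Longrightarrow> selfadjoint (block F (\<lambda>_. 0) (\<lambda>_. 0) F)"
  by (auto simp: selfadjoint_def inner_prod_def)

text \<open>For commuting entries the Cayley-Hamilton identity reads M M - (tr M) M + (det M) I = 0,
  so det M = 0 leaves M M = (A + B) M.\<close>

lemma block_square_eq:
  assumes lin: "bounded_linear A" "bounded_linear B" "bounded_linear X" "bounded_linear Xs"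
    and "X \<circ> Xs = Xs \<circ> X" "X \<circ> B = B \<circ> X" "A \<circ> Xs = Xs \<circ> A" "A \<circ> B = B \<circ> A"
    and det: "\<forall>x. A (B x) - Xs (X x) = 0"
  shows "block A X Xs B \<circ> block A X Xs B =
    block (\<lambda>x. A x + B x) (\<lambda>_. 0) (\<lambda>_. 0) (\<lambda>x. A x + B x) \<circ> block A X Xs B"
proof -
  have "X (Xs x) = Xs (X x)" "X (B x) = B (X x)" "A (Xs x) = Xs (A x)" "A (B x) = B (A x)" for x
    using assms(5-8) unfolding fun_eq_iff comp_def by simp_all
  moreover have "Xs (X x) = A (B x)" for x using det by (metis eq_iff_diff_eq_0)
  ultimately show ?thesis using lin by (simp add: fun_eq_iff linear_simps)
qed

lemma op_sqrt_eq_conj: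
  assumes M: "positive_op M" and W: "bounded_op W" "selfadjoint W" and WM: "W \<circ> M = M \<circ> W"
    and inverse: "\<And>z. W (W (W (W (M (M z))))) = M z"
  shows "op_sqrt M = W \<circ> W \<circ> M"
proof (rule op_sqrt_eqI)
  have WM_apply: "M (W z) = W (M z)" for z using fun_cong[OF WM] by simp
  have M': "bounded_op M" "selfadjoint M" "\<And>z. 0 \<le> inner z (M z)"
    using M by (simp_all add: positive_op_iff_real_positive_op real_positive_op_def)
  \<comment> \<open>W W M = W M W is the conjugate of M by the self-adjoint W\<close>
  have "real_positive_op (W \<circ> W \<circ> M)"
    unfolding real_positive_op_def selfadjoint_def
  proof (intro conjI allI)
    show "bounded_linear (W \<circ> W \<circ> M)"
      using bounded_op_comp[OF bounded_op_comp[OF W(1) W(1)] M'(1)] by (simp add: bounded_op_def)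
    fix z y
    show "inner ((W \<circ> W \<circ> M) z) y = inner z ((W \<circ> W \<circ> M) y)"
      using W(2) M'(2) by (simp add: selfadjoint_def WM_apply)
    show "0 \<le> inner z ((W \<circ> W \<circ> M) z)"
      using W(2) M'(3)[of "W z"] by (simp add: selfadjoint_def WM_apply)
  qed
  then show "positive_op (W \<circ> W \<circ> M)"
    using bounded_op_comp[OF bounded_op_comp[OF W(1) W(1)] M'(1)]
    by (simp add: positive_op_iff_real_positive_op)
  show "W \<circ> W \<circ> M \<circ> (W \<circ> W \<circ> M) = M"
    by (simp add: fun_eq_iff WM_apply inverse)
qed

lemma (in coercive_op) op_sqrt_block_eq:
  assumes M: "positive_op (block A X Xs B)"
    and lin: "bounded_linear A" "bounded_linear X" "bounded_linear Xs" "bounded_linear B"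
    and commute: "A \<circ> P = P \<circ> A" "X \<circ> P = P \<circ> X" "Xs \<circ> P = P \<circ> Xs" "B \<circ> P = P \<circ> B"
    and square: "block A X Xs B \<circ> block A X Xs B = block P (\<lambda>_. 0) (\<lambda>_. 0) P \<circ> block A X Xs B"
  shows "op_sqrt (block A X Xs B) = block (inv (op_sqrt P)) (\<lambda>_. 0) (\<lambda>_. 0) (inv (op_sqrt P)) \<circ> block A X Xs B"
proof -
  let ?M = "block A X Xs B"
  have powr_commute: "op_powr \<alpha> \<circ> C = C \<circ> op_powr \<alpha>" if "bounded_linear C" "C \<circ> P = P \<circ> C" for C \<alpha>
    using op_powr_commute[OF that] by simp
  define W where "W = block (op_powr (- 1 / 4)) (\<lambda>_. 0) (\<lambda>_. 0) (op_powr (- 1 / 4))"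
  have "op_sqrt ?M = W \<circ> W \<circ> ?M"
  proof (rule op_sqrt_eq_conj[OF M])
    show "bounded_op W" unfolding W_def by (intro bounded_op_block bounded_op_op_powr bounded_op_zero)
    show "selfadjoint W" unfolding W_def by (intro selfadjoint_block_diag selfadjoint_op_powr)
    show "W \<circ> ?M = ?M \<circ> W"
      unfolding W_def using lin commute
      by (intro block_diag_commute bounded_linear_op_powr powr_commute)
    have "W (W (W (W (block P (\<lambda>_. 0) (\<lambda>_. 0) P v)))) = v" for v
      by (cases v) (simp add: W_def op_powr_apply op_powr_add op_powr_0)
    then show "W (W (W (W (?M (?M z))))) = ?M z" for z
      using fun_cong[OF square, of z] by simp
  qed
  also have "W \<circ> W = block (op_powr (- 1 / 2)) (\<lambda>_. 0) (\<lambda>_. 0) (op_powr (- 1 / 2))"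
    unfolding W_def block_diag_comp by (simp add: comp_def op_powr_add)
  finally show ?thesis by (simp only: inv_op_sqrt_eq_op_powr)
qed

theorem corollary2p11:
  fixes A B X Xs :: "'a::complex_hilbert \<Rightarrow> 'a"
  assumes "bounded_op A" and "bounded_op B" and "bounded_op X"
    and "is_adjoint X Xs"
    and "A \<circ> X = X \<circ> A" and "A \<circ> Xs = Xs \<circ> A" and "A \<circ> B = B \<circ> A"
    and "X \<circ> Xs = Xs \<circ> X" and "X \<circ> B = B \<circ> X" and "Xs \<circ> B = B \<circ> Xs"
    and "positive_op A" and "invertible_op A"
    and "positive_op (block A X Xs B)"
    and "\<forall>x. A (B x) - Xs (X x) = 0"
  shows "op_sqrt (block A X Xs B) =
    block (inv (op_sqrt (\<lambda>x. A x + B x))) (\<lambda>_. 0) (\<lambda>_. 0) (inv (op_sqrt (\<lambda>x. A x + B x)))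
      \<circ> block A X Xs B"
proof -
  have "bounded_op Xs" using assms(4) by (simp add: is_adjoint_def)
  with assms(1-3) have lin: "bounded_linear A" "bounded_linear B" "bounded_linear X" "bounded_linear Xs"
    by (simp_all add: bounded_op_def)
  obtain c where "c > 0" and coercive_A: "\<And>x. c * (norm x)\<^sup>2 \<le> inner x (A x)"
    using coercive_if_positive_invertible[OF assms(11,12)] by blast
  have "positive_op B" by (rule positive_op_block_lower_right[OF assms(2) lin(4) assms(13)])
  with assms(11) interpret trace: coercive_op "\<lambda>x. A x + B x" c
    using \<open>c > 0\<close> coercive_A assms(1,2)
    by unfold_locales (auto simp: positive_op_iff_real_positive_op real_positive_op_def selfadjoint_def
        inner_add_left inner_add_right bounded_op_add intro: add_increasing2)
  show ?thesis
  proof (rule trace.op_sqrt_block_eq[OF assms(13) lin(1,3,4,2)])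
    show "block A X Xs B \<circ> block A X Xs B =
        block (\<lambda>x. A x + B x) (\<lambda>_. 0) (\<lambda>_. 0) (\<lambda>x. A x + B x) \<circ> block A X Xs B"
      using lin assms(8,9,6,7,14) by (rule block_square_eq)
  qed (use lin assms(5-10) in \<open>auto intro!: comp_add_commute\<close>)
qed

end
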